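(* Let $F$ be a countably infinite graph. Then every graph $H$ on vertex set $\mathbb{N}$ having infinitely many vertices of cofinite degree contains a subgraph isomorphic to $F$ whose vertex set is cofinite in $\mathbb{N}$ if and only if $F$ is strongly contracting.
   Context: A vertex $v$ of $H$ has cofinite degree if it is adjacent to all but finitely many vertices of $H$. $F$ is strongly contracting if there is $k\in\mathbb{N}$ such that for every $\ell\in\mathbb{N}$ there is an independent set $A$ in $F$ with $|A|\ge\ell$ and $|N(A)|\le k$, where $N(A)=\bigcup_{v\in A}N(v)$. *)

theory Defs
  imports Main "HOL-Library.Countable_Set"
begin

definition graph :: "'a set \<Rightarrow> ('a \<Rightarrow> 'a \<Rightarrow> bool) \<Rightarrow> bool" where
  "graph V E \<longleftrightarrow> (\<forall>u v. E u v \<longrightarrow> u \<in> V \<and> v \<in> V \<and> u \<noteq> v \<and> E v u)"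

definition nbhd :: "('a \<Rightarrow> 'a \<Rightarrow> bool) \<Rightarrow> 'a set \<Rightarrow> 'a set" where
  "nbhd E A = (\<Union>v\<in>A. {u. E v u})"

definition independent :: "('a \<Rightarrow> 'a \<Rightarrow> bool) \<Rightarrow> 'a set \<Rightarrow> bool" where
  "independent E A \<longleftrightarrow> (\<forall>u\<in>A. \<forall>v\<in>A. \<not> E u v)"

definition strongly_contracting :: "'a set \<Rightarrow> ('a \<Rightarrow> 'a \<Rightarrow> bool) \<Rightarrow> bool" where
  "strongly_contracting V E \<longleftrightarrow>
     (\<exists>k::nat. \<forall>l::nat. \<exists>A. A \<subseteq> V \<and> independent E A \<and> (infinite A \<or> l \<le> card A)
        \<and> finite (nbhd E A) \<and> card (nbhd E A) \<le> k)"

definition cofinite_degree :: "'a set \<Rightarrow> ('a \<Rightarrow> 'a \<Rightarrow> bool) \<Rightarrow> 'a \<Rightarrow> bool" where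
  "cofinite_degree V E v \<longleftrightarrow> finite {u \<in> V. \<not> E v u}"

text \<open>H (on vertex set UNIV :: nat set) contains a subgraph isomorphic to (V,E)
whose vertex set is cofinite: an injective map f on V whose image is cofinite and
which sends edges to edges (the image subgraph has vertex set f ` V and edge set the
image of E).\<close>
definition has_cofinite_copy :: "'a set \<Rightarrow> ('a \<Rightarrow> 'a \<Rightarrow> bool) \<Rightarrow> (nat \<Rightarrow> nat \<Rightarrow> bool) \<Rightarrow> bool" where
  "has_cofinite_copy V E H \<longleftrightarrow>
     (\<exists>f :: 'a \<Rightarrow> nat. inj_on f V \<and> finite (UNIV - f ` V) \<and>
        (\<forall>u\<in>V. \<forall>v\<in>V. E u v \<longrightarrow> H (f u) (f v)))"

end

theory Submission
  imports Defs "HOL-Library.Ramsey"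
begin

(* Necessity: if F is not strongly contracting, pick l k such that every independent set of
   size l k in F has more than k neighbours.  Let H be a clique on the even numbers together with
   consecutive blocks of odd numbers of sizes l 0 + 1, l 1 + 1, ..., the odd vertices of block k
   being adjacent exactly to the even vertices 2u with u < k (threshold_graph).  A cofinite copy of
   F contains a whole block k for large k; its preimage is independent of size l k + 1 and its
   neighbours map into {0, 2, ..., 2k - 2}, a contradiction.

   Sufficiency: by Ramsey's theorem H has an infinite clique c_0, c_1, ... of vertices of cofinite
   degree, and all but finitely many vertices of H are adjacent to c_0, ..., c_k.  These vertices
   are used up in stages: stage m maps the next vertex of F and the at most k neighbours of a fresh
   large independent set A of F onto the clique block c_(m(k+1)), ..., c_(m(k+1)+k), and fills the
   rest of that block and the m-th stratum of non-clique vertices with vertices of A.  The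
   neighbours of A sit on the clique, which is adjacent to everything placed so far, so edges are
   preserved, and every vertex adjacent to c_0, ..., c_k is eventually covered. *)

lemma nbhd_mono: "A \<subseteq> B \<Longrightarrow> nbhd E A \<subseteq> nbhd E B"
  unfolding nbhd_def by blast

lemma nbhd_subset: "graph V E \<Longrightarrow> nbhd E A \<subseteq> V"
  unfolding graph_def nbhd_def by blast

lemma independent_subset: "independent E B \<Longrightarrow> A \<subseteq> B \<Longrightarrow> independent E A"
  unfolding independent_def by blast

lemma independent_nbhd_disjoint: "independent E A \<Longrightarrow> A \<inter> nbhd E A = {}"
  unfolding independent_def nbhd_def by blast

lemma strongly_contractingI:
  assumes "\<And>l. \<exists>k A. A \<subseteq> V \<and> independent E A \<and> l k \<le> card A
                \<and> finite (nbhd E A) \<and> card (nbhd E A) \<le> k"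
  shows "strongly_contracting V E"
proof (rule ccontr)
  assume "\<not> strongly_contracting V E"
  then obtain l where "\<And>k A. A \<subseteq> V \<Longrightarrow> independent E A \<Longrightarrow> l k \<le> card A
               \<Longrightarrow> \<not> (finite (nbhd E A) \<and> card (nbhd E A) \<le> k)"
    unfolding strongly_contracting_def by metis
  with assms[of l] show False
    by blast
qed

primrec block_start :: "(nat \<Rightarrow> nat) \<Rightarrow> nat \<Rightarrow> nat" where
  "block_start l 0 = 0"
| "block_start l (Suc n) = block_start l n + l n + 1"

lemma strict_mono_block_start: "strict_mono (block_start l)"
  by (simp add: strict_mono_Suc_iff)

definition threshold_graph :: "(nat \<Rightarrow> nat) \<Rightarrow> nat \<Rightarrow> nat \<Rightarrow> bool" where
  "threshold_graph l u v \<longleftrightarrow> (even u \<and> even v \<and> u \<noteq> v)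
     \<or> (even u \<and> odd v \<and> block_start l (Suc (u div 2)) \<le> v div 2)
     \<or> (odd u \<and> even v \<and> block_start l (Suc (v div 2)) \<le> u div 2)"

lemma graph_threshold_graph: "graph UNIV (threshold_graph l)"
  unfolding graph_def threshold_graph_def by auto

lemma cofinite_degree_threshold_graph_even:
  "cofinite_degree UNIV (threshold_graph l) (2 * i)"
proof -
  have "{u \<in> UNIV. \<not> threshold_graph l (2 * i) u} \<subseteq> {..< 2 * block_start l (Suc i) + 2 * i + 1}"
    unfolding threshold_graph_def by auto
  then show ?thesis
    unfolding cofinite_degree_def using finite_subset by blast
qed

lemma infinite_cofinite_degree_threshold_graph:
  "infinite {v. cofinite_degree UNIV (threshold_graph l) v}"
proof -
  have "range (\<lambda>i::nat. 2 * i) \<subseteq> {v. cofinite_degree UNIV (threshold_graph l) v}"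
    using cofinite_degree_threshold_graph_even by auto
  moreover have "infinite (range (\<lambda>i::nat. 2 * i))"
    by (rule range_inj_infinite) (auto simp: inj_def)
  ultimately show ?thesis
    using finite_subset by blast
qed

lemma independent_threshold_graph_odd: "independent (threshold_graph l) ((\<lambda>x. 2 * x + 1) ` X)"
  unfolding independent_def threshold_graph_def by auto

lemma nbhd_threshold_graph_odd_block:
  "nbhd (threshold_graph l) ((\<lambda>x. 2 * x + 1) ` {j..<block_start l (Suc k)}) \<subseteq> (\<lambda>i. 2 * i) ` {..<k}"
proof
  fix w assume "w \<in> nbhd (threshold_graph l) ((\<lambda>x. 2 * x + 1) ` {j..<block_start l (Suc k)})"
  then have "even w" and "block_start l (Suc (w div 2)) < block_start l (Suc k)"
    unfolding nbhd_def threshold_graph_def by auto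
  then have "even w" and "w div 2 < k"
    by (metis Suc_less_eq strict_mono_less strict_mono_block_start)+
  then show "w \<in> (\<lambda>i. 2 * i) ` {..<k}"
    by (auto intro!: image_eqI[of _ _ "w div 2"])
qed

lemma independent_vimage:
  assumes "\<And>u v. u \<in> V \<Longrightarrow> v \<in> V \<Longrightarrow> E u v \<Longrightarrow> H (f u) (f v)" and "independent H S"
  shows "independent E (f -` S \<inter> V)"
  using assms unfolding independent_def by blast

lemma nbhd_vimage:
  assumes "graph V E" and "\<And>u v. u \<in> V \<Longrightarrow> v \<in> V \<Longrightarrow> E u v \<Longrightarrow> H (f u) (f v)"
  shows "nbhd E (f -` S \<inter> V) \<subseteq> f -` nbhd H S \<inter> V"
  using assms unfolding graph_def nbhd_def by blast

lemma card_vimage_inj_on: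
  assumes "inj_on f V" and "B \<subseteq> f ` V"
  shows "card (f -` B \<inter> V) = card B"
proof -
  have "f ` (f -` B \<inter> V) = B"
    using assms(2) by blast
  then show ?thesis
    using card_image[OF inj_on_subset[OF assms(1)]] by (metis Int_lower2)
qed

lemma contracting_set_of_threshold_graph_copy:
  assumes "graph V E" and "has_cofinite_copy V E (threshold_graph l)"
  shows "\<exists>k A. A \<subseteq> V \<and> independent E A \<and> card A = Suc (l k)
           \<and> finite (nbhd E A) \<and> card (nbhd E A) \<le> k"
proof -
  from assms(2) obtain f where inj: "inj_on f V" and cofin: "finite (UNIV - f ` V)"
    and hom: "\<And>u v. u \<in> V \<Longrightarrow> v \<in> V \<Longrightarrow> E u v \<Longrightarrow> threshold_graph l (f u) (f v)"
    unfolding has_cofinite_copy_def by blast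
  obtain k where k: "UNIV - f ` V \<subseteq> {..<k}"
    using finite_nat_bounded[OF cofin] by blast
  define B where "B = (\<lambda>x. 2 * x + 1) ` {block_start l k..<block_start l (Suc k)}"
  define Q where "Q = (\<lambda>i. 2 * i) ` {..<k}"
  define A where "A = f -` B \<inter> V"
  have "k \<le> block_start l k"
    using strict_mono_imp_increasing[OF strict_mono_block_start] .
  then have "B \<subseteq> f ` V"
    using k unfolding B_def by force
  then have "card A = card B"
    unfolding A_def by (rule card_vimage_inj_on[OF inj])
  also have "card B = Suc (l k)"
    unfolding B_def by (subst card_image) (auto simp: inj_on_def)
  finally have "card A = Suc (l k)" .
  moreover have "independent E A"
    unfolding A_def B_def
    by (rule independent_vimage[of V E "threshold_graph l" f, OF hom independent_threshold_graph_odd])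
  moreover have "nbhd E A \<subseteq> f -` Q \<inter> V"
    using nbhd_vimage[of V E "threshold_graph l" f B, OF assms(1) hom]
      nbhd_threshold_graph_odd_block[of l _ k]
    unfolding A_def B_def Q_def by blast
  moreover have "finite (f -` Q \<inter> V)" and "card (f -` Q \<inter> V) \<le> k"
    using finite_vimage_IntI[OF _ inj] card_vimage_inj_on_le[OF inj, of Q]
      card_image_le[of "{..<k}" "\<lambda>i. 2 * i"]
    unfolding Q_def by simp_all
  ultimately show ?thesis
    unfolding A_def by (metis Int_lower2 card_mono finite_subset le_trans)
qed

lemma bij_betw_override_on:
  assumes "bij_betw f A S" and "bij_betw g B T" and "A \<inter> B = {}" and "S \<inter> T = {}"
  shows "bij_betw (override_on g f A) (A \<union> B) (S \<union> T)"
proof (rule bij_betw_combine)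
  show "bij_betw (override_on g f A) A S"
    using assms(1) by (subst bij_betw_cong[of _ _ f]) auto
  show "bij_betw (override_on g f A) B T"
    using assms(2,3) by (subst bij_betw_cong[of _ _ g]) (auto simp: override_on_def)
qed (rule assms(4))

lemma bij_betw_Un_mapping_into:
  assumes "finite X" and "finite Y" and "X \<inter> Y = {}" and "finite T" and "S \<subseteq> T"
    and "card X \<le> card S" and "card X + card Y = card T"
  obtains \<beta> where "bij_betw \<beta> (X \<union> Y) T" and "\<beta> ` X \<subseteq> S"
proof -
  obtain Z where "Z \<subseteq> S" and card_Z: "card Z = card X" and "finite Z"
    using obtain_subset_with_card_n[OF assms(6)] .
  obtain \<beta>1 where \<beta>1: "bij_betw \<beta>1 X Z"
    using finite_same_card_bij[OF assms(1) \<open>finite Z\<close>] card_Z by metis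
  have "card (T - Z) = card Y"
    using card_Diff_subset[OF \<open>finite Z\<close>] \<open>Z \<subseteq> S\<close> assms(5,7) card_Z by auto
  then obtain \<beta>2 where \<beta>2: "bij_betw \<beta>2 Y (T - Z)"
    using finite_same_card_bij[OF assms(2)] assms(4) by (metis finite_Diff)
  have "bij_betw (override_on \<beta>2 \<beta>1 X) (X \<union> Y) (Z \<union> (T - Z))"
    using bij_betw_override_on[OF \<beta>1 \<beta>2 assms(3)] by blast
  moreover have "Z \<union> (T - Z) = T"
    using \<open>Z \<subseteq> S\<close> assms(5) by blast
  moreover have "override_on \<beta>2 \<beta>1 X ` X \<subseteq> S"
    using \<beta>1 \<open>Z \<subseteq> S\<close> unfolding bij_betw_def by auto
  ultimately show thesis
    using that by metis
qed

lemma limit_of_compatible_maps: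
  assumes mono: "\<And>m. D m \<subseteq> D (Suc m)"
    and compat: "\<And>m v. v \<in> D m \<Longrightarrow> g (Suc m) v = g m v"
  obtains f where "\<And>m v. v \<in> D m \<Longrightarrow> f v = g m v"
proof
  have agree: "g n v = g m v" if "m \<le> n" and "v \<in> D m" for m n v
    using that(1)
  proof (induction n rule: dec_induct)
    case (step n)
    then show ?case
      using compat lift_Suc_mono_le[of D, OF mono] that(2) by (metis subsetD)
  qed simp
  fix m v assume "v \<in> D m"
  then have "(LEAST n. v \<in> D n) \<le> m" and "v \<in> D (LEAST n. v \<in> D n)"
    by (auto intro: Least_le LeastI)
  then show "g (LEAST n. v \<in> D n) v = g m v"
    by (rule agree[symmetric])
qed

lemma infinite_clique_of_cofinite_degree_vertices:
  assumes "graph UNIV H" and "infinite {v. cofinite_degree UNIV H v}"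
  obtains Y where "Y \<subseteq> {v. cofinite_degree UNIV H v}" and "infinite Y"
    and "\<And>x y. x \<in> Y \<Longrightarrow> y \<in> Y \<Longrightarrow> x \<noteq> y \<Longrightarrow> H x y"
proof -
  define colour where "colour X = (if \<exists>x y. X = {x, y} \<and> H x y then 1 else 0 :: nat)" for X
  have colour: "colour {x, y} = (if H x y then 1 else 0)" for x y
    using assms(1) unfolding colour_def graph_def doubleton_eq_iff by auto
  have "\<forall>x\<in>{v. cofinite_degree UNIV H v}. \<forall>y\<in>{v. cofinite_degree UNIV H v}. x \<noteq> y \<longrightarrow> colour {x, y} < 2"
    by (simp add: colour)
  from Ramsey2[OF assms(2) this] obtain Y t where Y: "Y \<subseteq> {v. cofinite_degree UNIV H v}" "infinite Y"
    and homogeneous: "\<forall>x\<in>Y. \<forall>y\<in>Y. x \<noteq> y \<longrightarrow> colour {x, y} = t"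
    by blast
  obtain y where "y \<in> Y"
    using \<open>infinite Y\<close> by (metis finite.emptyI ex_in_conv)
  have "t = 1"
  proof (rule ccontr)
    assume "t \<noteq> 1"
    have "Y - {y} \<subseteq> {u \<in> UNIV. \<not> H y u}"
    proof
      fix u assume "u \<in> Y - {y}"
      then have "colour {y, u} \<noteq> 1"
        using homogeneous \<open>y \<in> Y\<close> \<open>t \<noteq> 1\<close> by auto
      then show "u \<in> {u \<in> UNIV. \<not> H y u}"
        unfolding colour by auto
    qed
    moreover have "finite {u \<in> UNIV. \<not> H y u}"
      using Y(1) \<open>y \<in> Y\<close> unfolding cofinite_degree_def by blast
    ultimately have "finite (Y - {y})"
      by (rule finite_subset)
    then show False
      using \<open>infinite Y\<close> by simp
  qed
  then have "H x y" if "x \<in> Y" and "y \<in> Y" and "x \<noteq> y" for x y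
    using homogeneous that colour by (metis zero_neq_one)
  with Y show thesis
    by (rule that)
qed

lemma infinite_clique_of_cofinite_degree:
  fixes H :: "'a \<Rightarrow> 'a \<Rightarrow> bool"
  assumes "graph UNIV H" and "infinite {v. cofinite_degree UNIV H v}"
  obtains c :: "nat \<Rightarrow> 'a" where "inj c" and "\<And>i. cofinite_degree UNIV H (c i)"
    and "\<And>i j. i \<noteq> j \<Longrightarrow> H (c i) (c j)"
proof -
  obtain Y where Y: "Y \<subseteq> {v. cofinite_degree UNIV H v}" "infinite Y"
    and clique: "\<And>x y. x \<in> Y \<Longrightarrow> y \<in> Y \<Longrightarrow> x \<noteq> y \<Longrightarrow> H x y"
    using infinite_clique_of_cofinite_degree_vertices[OF assms] by blast
  obtain c :: "nat \<Rightarrow> 'a" where "inj c" and "range c \<subseteq> Y"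
    using infinite_countable_subset[OF \<open>infinite Y\<close>] by blast
  show thesis
  proof (rule that)
    show "inj c"
      by fact
    show "cofinite_degree UNIV H (c i)" for i
      using \<open>range c \<subseteq> Y\<close> Y(1) by blast
    show "H (c i) (c j)" if "i \<noteq> j" for i j
      using clique \<open>range c \<subseteq> Y\<close> \<open>inj c\<close> that by (meson injD rangeI subsetD)
  qed
qed

locale cofinite_embedding =
  fixes V :: "'a set" and E :: "'a \<Rightarrow> 'a \<Rightarrow> bool" and H :: "nat \<Rightarrow> nat \<Rightarrow> bool"
    and k :: nat and c :: "nat \<Rightarrow> nat"
  assumes graph_F: "graph V E" and countable_V: "countable V"
    and contracting: "\<And>l. \<exists>A. A \<subseteq> V \<and> independent E A \<and> (infinite A \<or> l \<le> card A)
                             \<and> finite (nbhd E A) \<and> card (nbhd E A) \<le> k"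
    and graph_H: "graph UNIV H"
    and inj_c: "inj c" and cofinite_c: "\<And>i. cofinite_degree UNIV H (c i)"
    and clique_c: "\<And>i j. i \<noteq> j \<Longrightarrow> H (c i) (c j)"
begin

lemma independent_set_avoiding:
  assumes "finite D"
  obtains A where "A \<subseteq> V - D" and "card A = n" and "independent E A"
    and "finite (nbhd E A)" and "card (nbhd E A) \<le> k"
proof -
  obtain A0 where "A0 \<subseteq> V" and "independent E A0" and size: "infinite A0 \<or> n + card D \<le> card A0"
    and "finite (nbhd E A0)" and "card (nbhd E A0) \<le> k"
    using contracting by blast
  have "infinite (A0 - D) \<or> n \<le> card (A0 - D)"
    using size diff_card_le_card_Diff[OF assms, of A0] assms by auto
  then obtain A where "A \<subseteq> A0 - D" and "card A = n"
    by (metis infinite_arbitrarily_large obtain_subset_with_card_n)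
  have "nbhd E A \<subseteq> nbhd E A0"
    using \<open>A \<subseteq> A0 - D\<close> by (intro nbhd_mono) blast
  show thesis
  proof
    show "A \<subseteq> V - D"
      using \<open>A \<subseteq> A0 - D\<close> \<open>A0 \<subseteq> V\<close> by blast
    show "independent E A"
      using \<open>independent E A0\<close> \<open>A \<subseteq> A0 - D\<close> independent_subset by blast
    show "finite (nbhd E A)"
      using \<open>finite (nbhd E A0)\<close> \<open>nbhd E A \<subseteq> nbhd E A0\<close> by (rule finite_subset[rotated])
    show "card (nbhd E A) \<le> k"
      using card_mono[OF \<open>finite (nbhd E A0)\<close> \<open>nbhd E A \<subseteq> nbhd E A0\<close>] \<open>card (nbhd E A0) \<le> k\<close>
      by linarith
  qed fact+
qed

lemma V_nonempty: "V \<noteq> {}"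
proof -
  obtain A where "A \<subseteq> V" and "infinite A \<or> 1 \<le> card A"
    using contracting[of 1] by blast
  then show ?thesis
    by auto
qed

(* The clique is consumed in blocks of R = k + 1 vertices: one stage needs room for the next
   vertex of V and for the at most k neighbours of its independent set. *)
abbreviation R :: nat where "R \<equiv> Suc k"

lemma H_sym: "H x y \<Longrightarrow> H y x"
  using graph_H unfolding graph_def by blast

lemma finite_non_neighbours_c: "finite {w. \<not> H w (c i)}"
proof -
  have "{w. \<not> H w (c i)} \<subseteq> {u \<in> UNIV. \<not> H (c i) u}"
    using H_sym by blast
  then show ?thesis
    using cofinite_c[of i] finite_subset unfolding cofinite_degree_def by blast
qed

(* If c_e is the first clique vertex not adjacent to w, then w is adjacent to all clique blocks
   below block e div R and lies in stratum e div R - 1.  A vertex adjacent to the whole clique gets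
   level w instead, which keeps every stratum finite. *)
definition level :: "nat \<Rightarrow> nat" where
  "level w = (if \<forall>i. H w (c i) then w else (LEAST i. \<not> H w (c i)) div R - 1)"

definition stratum :: "nat \<Rightarrow> nat set" where
  "stratum m = {w. w \<notin> range c \<and> (\<forall>i<R. H w (c i)) \<and> level w = m}"

lemma stratum_adjacent:
  assumes "w \<in> stratum m" and "i < Suc m * R"
  shows "H w (c i)"
proof (cases "\<forall>i. H w (c i)")
  case False
  define e where "e = (LEAST i. \<not> H w (c i))"
  have "\<not> H w (c e)"
    unfolding e_def using False by (metis LeastI)
  moreover have "\<forall>i<R. H w (c i)"
    using assms(1) unfolding stratum_def by blast
  ultimately have "R \<le> e"
    by (meson not_le)
  moreover have "m = e div R - 1"
    using assms(1) False unfolding stratum_def level_def e_def by simp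
  ultimately have "Suc m * R \<le> e"
    by (metis Suc_pred' div_greater_zero_iff div_times_less_eq_dividend zero_less_Suc)
  with assms(2) have "i < e"
    by linarith
  then show ?thesis
    using not_less_Least unfolding e_def by blast
qed simp

lemma finite_stratum: "finite (stratum m)"
proof -
  have "stratum m \<subseteq> {m} \<union> (\<Union>i<Suc (Suc m) * R. {w. \<not> H w (c i)})"
  proof
    fix w assume w: "w \<in> stratum m"
    show "w \<in> {m} \<union> (\<Union>i<Suc (Suc m) * R. {w. \<not> H w (c i)})"
    proof (cases "\<forall>i. H w (c i)")
      case True
      then show ?thesis
        using w unfolding stratum_def level_def by auto
    next
      case False
      define e where "e = (LEAST i. \<not> H w (c i))"
      have "e div R - 1 = m"
        using w False unfolding stratum_def level_def e_def by auto
      then have "e div R < Suc (Suc m)"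
        by linarith
      then have "e < Suc (Suc m) * R"
        by (metis div_less_iff_less_mult zero_less_Suc)
      moreover have "\<not> H w (c e)"
        unfolding e_def using False by (metis LeastI)
      ultimately show ?thesis
        by auto
    qed
  qed
  then show ?thesis
    using finite_non_neighbours_c finite_subset by blast
qed

definition targets :: "nat \<Rightarrow> nat set" where
  "targets m = c ` {..<m * R} \<union> (\<Union>m'<m. stratum m')"

definition fresh_targets :: "nat \<Rightarrow> nat set" where
  "fresh_targets m = c ` {m * R..<Suc m * R} \<union> stratum m"

lemma targets_Suc: "targets (Suc m) = targets m \<union> fresh_targets m"
proof -
  have "{..<Suc m * R} = {..<m * R} \<union> {m * R..<Suc m * R}"
    by auto
  then show ?thesis
    unfolding targets_def fresh_targets_def by (auto simp: lessThan_Suc)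
qed

lemma targets_fresh_targets_disjoint: "targets m \<inter> fresh_targets m = {}"
proof -
  have "c a \<notin> fresh_targets m" if "a < m * R" for a
    using that injD[OF inj_c] unfolding fresh_targets_def stratum_def by fastforce
  moreover have "x \<notin> fresh_targets m" if "x \<in> stratum m'" and "m' < m" for x m'
    using that unfolding fresh_targets_def stratum_def by auto
  ultimately show ?thesis
    unfolding targets_def by blast
qed

lemma card_clique_block: "card (c ` {m * R..<Suc m * R}) = R"
  using inj_c by (simp add: card_image inj_on_subset)

lemma card_fresh_targets: "card (fresh_targets m) = R + card (stratum m)"
proof -
  note card_clique_block
  moreover have "c ` {m * R..<Suc m * R} \<inter> stratum m = {}"
    unfolding stratum_def by blast
  ultimately show ?thesis
    unfolding fresh_targets_def using finite_stratum by (simp add: card_Un_disjoint)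
qed

lemma finite_fresh_targets: "finite (fresh_targets m)"
  unfolding fresh_targets_def using finite_stratum by blast

lemma finite_targets: "finite (targets m)"
  unfolding targets_def using finite_stratum by blast

definition window :: "nat \<Rightarrow> nat set" where
  "window m = c ` {..<Suc m * R} \<union> stratum m"

lemma fresh_targets_window: "fresh_targets m \<subseteq> window m"
  unfolding fresh_targets_def window_def by auto

lemma adjacent_in_window:
  assumes "x \<in> window m" and "y \<in> window m" and "x \<noteq> y"
    and "x \<in> c ` {..<Suc m * R} \<or> y \<in> c ` {..<Suc m * R}"
  shows "H x y"
proof -
  have "H (c i) w" if "i < Suc m * R" and "w \<in> window m" and "c i \<noteq> w" for i w
  proof (cases "w \<in> stratum m")
    case True
    then show ?thesis
      using stratum_adjacent[OF True \<open>i < Suc m * R\<close>] H_sym by blast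
  next
    case False
    then obtain j where "w = c j"
      using \<open>w \<in> window m\<close> unfolding window_def by blast
    moreover have "i \<noteq> j"
      using \<open>c i \<noteq> w\<close> \<open>w = c j\<close> by blast
    ultimately show ?thesis
      using clique_c by simp
  qed
  then show ?thesis
    using assms H_sym by blast
qed

lemma targets_exhaust:
  assumes "\<forall>i<R. H y (c i)"
  obtains m where "y \<in> targets m"
proof (cases "y \<in> range c")
  case True
  then obtain i where "y = c i"
    by blast
  then have "y \<in> targets (Suc i)"
    unfolding targets_def by auto
  then show thesis
    by (rule that)
next
  case False
  then have "y \<in> stratum (level y)"
    using assms unfolding stratum_def by simp
  then have "y \<in> targets (Suc (level y))"
    unfolding targets_def by blast
  then show thesis
    by (rule that)
qed

(* The hubs K are mapped into
   the clique and every other vertex of D has all its F-neighbours among the hubs, so vertices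
   added later are joined to D only through K. *)
definition stage :: "nat \<Rightarrow> 'a set \<Rightarrow> ('a \<Rightarrow> nat) \<Rightarrow> 'a set \<Rightarrow> bool" where
  "stage m D g K \<longleftrightarrow> D \<subseteq> V \<and> K \<subseteq> D \<and> bij_betw g D (targets m) \<and> g ` K \<subseteq> c ` {..<m * R}
     \<and> (\<forall>u\<in>D. \<forall>v\<in>D. E u v \<longrightarrow> H (g u) (g v))
     \<and> (\<forall>v\<in>D - K. \<forall>u. E v u \<longrightarrow> u \<in> K)
     \<and> (\<forall>j<m. from_nat_into V j \<in> D)"

lemma stage_0: "stage 0 {} g {}"
  by (simp add: stage_def targets_def bij_betw_def)

lemma stageD:
  assumes "stage m D g K"
  shows "D \<subseteq> V" and "K \<subseteq> D" and "bij_betw g D (targets m)" and "g ` K \<subseteq> c ` {..<m * R}"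
    and "\<And>u v. u \<in> D \<Longrightarrow> v \<in> D \<Longrightarrow> E u v \<Longrightarrow> H (g u) (g v)"
    and "\<And>v u. v \<in> D - K \<Longrightarrow> E v u \<Longrightarrow> u \<in> K"
    and "\<And>j. j < m \<Longrightarrow> from_nat_into V j \<in> D"
  using assms unfolding stage_def by blast+

lemma finite_stage: "stage m D g K \<Longrightarrow> finite D"
  using stageD(3) bij_betw_finite finite_targets by blast

context
  fixes m D g K N A \<beta>
  assumes stage: "stage m D g K" and disjoint: "D \<inter> (N \<union> A) = {}"
    and \<beta>: "bij_betw \<beta> (N \<union> A) (fresh_targets m)" and \<beta>_N: "\<beta> ` N \<subseteq> c ` {m * R..<Suc m * R}"
begin

lemma bij_betw_extended: "bij_betw (override_on \<beta> g D) (D \<union> N \<union> A) (targets (Suc m))"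
  using bij_betw_override_on[OF stageD(3)[OF stage] \<beta> disjoint targets_fresh_targets_disjoint]
  unfolding targets_Suc by (simp add: Un_assoc)

lemma hubs_extended: "override_on \<beta> g D ` (K \<union> N) \<subseteq> c ` {..<Suc m * R}"
proof -
  have "override_on \<beta> g D ` K = g ` K"
    using stageD(2)[OF stage] by (intro image_cong) auto
  moreover have "override_on \<beta> g D ` N = \<beta> ` N"
    using disjoint by (intro image_cong) (auto simp: override_on_def)
  ultimately show ?thesis
    using stageD(4)[OF stage] \<beta>_N by (auto simp: image_Un)
qed

lemma window_extended:
  assumes "v \<in> K \<union> N \<union> A"
  shows "override_on \<beta> g D v \<in> window m"
proof (cases "v \<in> K \<union> N")
  case True
  then show ?thesis
    using hubs_extended unfolding window_def by blast
next
  case False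
  then have "v \<in> A" and "v \<notin> D"
    using assms disjoint by blast+
  then have "override_on \<beta> g D v \<in> fresh_targets m"
    using bij_betw_apply[OF \<beta>] by simp
  then show ?thesis
    using fresh_targets_window by blast
qed

lemma edge_extended:
  assumes "independent E A" and uv: "u \<in> D \<union> N \<union> A" "v \<in> D \<union> N \<union> A" "E u v"
  shows "H (override_on \<beta> g D u) (override_on \<beta> g D v)"
proof (cases "u \<in> D - K \<or> v \<in> D - K")
  case True
  then have "u \<in> D" and "v \<in> D"
    using stageD(2,6)[OF stage] uv(3) graph_F unfolding graph_def by blast+
  then show ?thesis
    using stageD(5)[OF stage] uv(3) by simp
next
  case False
  then have uv': "u \<in> K \<union> N \<union> A" "v \<in> K \<union> N \<union> A"
    using uv(1,2) by auto
  have "override_on \<beta> g D u \<noteq> override_on \<beta> g D v"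
    using bij_betw_extended uv graph_F unfolding graph_def bij_betw_def by (metis inj_onD)
  note adjacent = adjacent_in_window[OF window_extended[OF uv'(1)] window_extended[OF uv'(2)] this]
  have "u \<in> K \<union> N \<or> v \<in> K \<union> N"
    using uv' uv(3) \<open>independent E A\<close> unfolding independent_def by blast
  then show ?thesis
    using hubs_extended by (blast intro: adjacent)
qed

lemma leaf_extended:
  assumes "nbhd E A \<subseteq> D \<union> N" and "v \<in> D \<union> N \<union> A - (K \<union> N)" and "E v u"
  shows "u \<in> K \<union> N"
proof (cases "v \<in> D")
  case True
  then show ?thesis
    using stageD(6)[OF stage] assms(2,3) by blast
next
  case False
  then have "u \<in> D \<union> N"
    using assms unfolding nbhd_def by blast
  moreover have "u \<notin> D - K"
    using stageD(2,6)[OF stage] graph_F assms(3) False unfolding graph_def by blast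
  ultimately show ?thesis
    by blast
qed

lemma stage_extend:
  assumes "N \<subseteq> V" and "A \<subseteq> V" and "independent E A" and "nbhd E A \<subseteq> D \<union> N"
    and "from_nat_into V m \<in> D \<union> N"
  shows "stage (Suc m) (D \<union> N \<union> A) (override_on \<beta> g D) (K \<union> N)"
  unfolding stage_def
proof (intro conjI ballI allI impI)
  show "from_nat_into V j \<in> D \<union> N \<union> A" if "j < Suc m" for j
    using that stageD(7)[OF stage] assms(5) less_Suc_eq by auto
  show "H (override_on \<beta> g D u) (override_on \<beta> g D v)"
    if "u \<in> D \<union> N \<union> A" and "v \<in> D \<union> N \<union> A" and "E u v" for u v
    using edge_extended[OF assms(3) that] .
  show "u \<in> K \<union> N" if "v \<in> D \<union> N \<union> A - (K \<union> N)" and "E v u" for v u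
    using leaf_extended[OF assms(4) that] .
qed (use stageD(1,2)[OF stage] assms(1,2) bij_betw_extended hubs_extended in auto)

end

lemma independent_extension_sets:
  assumes "finite D" and "x \<in> V" and "R \<le> n"
  obtains N A where "N \<subseteq> V" and "x \<in> D \<union> N" and "N \<inter> D = {}" and "card N \<le> R"
    and "finite N" and "finite A" and "A \<subseteq> V" and "A \<inter> (D \<union> N) = {}" and "independent E A"
    and "nbhd E A \<subseteq> D \<union> N" and "card N + card A = n"
proof -
  have "finite (insert x D)"
    using \<open>finite D\<close> by simp
  then obtain A' where A': "A' \<subseteq> V - insert x D" "card A' = n"
    "independent E A'" "finite (nbhd E A')" "card (nbhd E A') \<le> k"
    by (rule independent_set_avoiding)
  define N where "N = insert x (nbhd E A') - D"
  have "card N \<le> card (insert x (nbhd E A'))"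
    unfolding N_def using A'(4) by (intro card_mono) auto
  also have "\<dots> \<le> R"
    using A'(4,5) by (simp add: card_insert_if)
  finally have "card N \<le> R" .
  then obtain A where "A \<subseteq> A'" and card_A: "card A = card A' - card N" and "finite A"
    by (metis obtain_subset_with_card_n diff_le_self)
  show thesis
  proof
    show "N \<subseteq> V"
      unfolding N_def using \<open>x \<in> V\<close> nbhd_subset[OF graph_F] by blast
    show "finite N"
      unfolding N_def using A'(4) by blast
    show "A \<inter> (D \<union> N) = {}"
      using \<open>A \<subseteq> A'\<close> A'(1) independent_nbhd_disjoint[OF A'(3)] unfolding N_def by blast
    show "independent E A"
      using A'(3) \<open>A \<subseteq> A'\<close> by (rule independent_subset)
    show "nbhd E A \<subseteq> D \<union> N"
      using nbhd_mono[OF \<open>A \<subseteq> A'\<close>] unfolding N_def by blast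
    show "card N + card A = n"
      using card_A \<open>card N \<le> R\<close> A'(2) assms(3) by linarith
  qed (use \<open>A \<subseteq> A'\<close> A'(1) \<open>card N \<le> R\<close> \<open>finite A\<close> in \<open>auto simp: N_def\<close>)
qed

lemma stage_Suc:
  assumes "stage m D g K"
  obtains D' g' K' where "stage (Suc m) D' g' K'" and "D \<subseteq> D'" and "\<forall>v\<in>D. g' v = g v"
proof -
  obtain N A where N: "N \<subseteq> V" "from_nat_into V m \<in> D \<union> N" "N \<inter> D = {}" "card N \<le> R" "finite N"
    and A: "finite A" "A \<subseteq> V" "A \<inter> (D \<union> N) = {}" "independent E A" "nbhd E A \<subseteq> D \<union> N"
    and card_NA: "card N + card A = R + card (stratum m)"
    by (rule independent_extension_sets[OF finite_stage[OF assms] from_nat_into[OF V_nonempty] le_add1])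
  obtain \<beta> where \<beta>: "bij_betw \<beta> (N \<union> A) (fresh_targets m)"
    and \<beta>_N: "\<beta> ` N \<subseteq> c ` {m * R..<Suc m * R}"
  proof (rule bij_betw_Un_mapping_into[of N A "fresh_targets m" "c ` {m * R..<Suc m * R}"])
    show "card N \<le> card (c ` {m * R..<Suc m * R})"
      using N(4) card_clique_block by simp
    show "card N + card A = card (fresh_targets m)"
      using card_NA card_fresh_targets by simp
  qed (use N A finite_fresh_targets in \<open>auto simp: fresh_targets_def\<close>)
  have "D \<inter> (N \<union> A) = {}"
    using N(3) A(3) by blast
  from stage_extend[OF assms this \<beta> \<beta>_N N(1) A(2,4,5) N(2)] show thesis
    by (rule that) auto
qed

lemma stage_sequence:
  obtains D g K where "\<And>m. stage m (D m) (g m) (K m)" and "\<And>m. D m \<subseteq> D (Suc m)"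
    and "\<And>m v. v \<in> D m \<Longrightarrow> g (Suc m) v = g m v"
proof -
  let ?P = "\<lambda>m s. stage m (fst s) (fst (snd s)) (snd (snd s))"
  let ?Q = "\<lambda>m s s'. fst s \<subseteq> fst s' \<and> (\<forall>v\<in>fst s. fst (snd s') v = fst (snd s) v)"
  have "\<exists>s. \<forall>m. ?P m (s m) \<and> ?Q m (s m) (s (Suc m))"
  proof (rule dependent_nat_choice)
    show "\<exists>x. ?P 0 x"
      using stage_0 by auto
    show "\<exists>y. ?P (Suc m) y \<and> ?Q m x y" if stage_m: "?P m x" for m x
    proof -
      obtain D' g' K' where "stage (Suc m) D' g' K'" and "fst x \<subseteq> D'"
        and "\<forall>v\<in>fst x. g' v = fst (snd x) v"
        using stage_Suc[OF stage_m] .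
      then show ?thesis
        by (intro exI[of _ "(D', g', K')"]) simp
    qed
  qed
  then obtain s where "\<forall>m. ?P m (s m) \<and> ?Q m (s m) (s (Suc m))"
    by blast
  then show thesis
    by (intro that[of "\<lambda>m. fst (s m)" "\<lambda>m. fst (snd (s m))" "\<lambda>m. snd (snd (s m))"]) auto
qed

lemma stage_limit:
  obtains D g K f where "\<And>m. stage m (D m) (g m) (K m)" and "\<And>m v. v \<in> D m \<Longrightarrow> f v = g m v"
    and "\<And>u v. u \<in> V \<Longrightarrow> v \<in> V \<Longrightarrow> \<exists>n. u \<in> D n \<and> v \<in> D n"
proof -
  obtain D g K where stage: "\<And>m. stage m (D m) (g m) (K m)" and mono: "\<And>m. D m \<subseteq> D (Suc m)"
    and compat: "\<And>m v. v \<in> D m \<Longrightarrow> g (Suc m) v = g m v"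
    using stage_sequence by blast
  obtain f where f: "\<And>m v. v \<in> D m \<Longrightarrow> f v = g m v"
    using limit_of_compatible_maps[of D g] mono compat by blast
  have enumerated: "v \<in> D (Suc (to_nat_on V v))" if "v \<in> V" for v
    using stageD(7)[OF stage, of "to_nat_on V v"] from_nat_into_to_nat_on[OF countable_V that]
    by simp
  have "\<exists>n. u \<in> D n \<and> v \<in> D n" if "u \<in> V" and "v \<in> V" for u v
    using enumerated[OF that(1)] enumerated[OF that(2)] lift_Suc_mono_le[of D, OF mono]
    by (metis max.cobounded1 max.cobounded2 subsetD)
  then show thesis
    using that f stage by blast
qed

theorem cofinite_copy: "has_cofinite_copy V E H"
proof -
  obtain D g K f where stage: "\<And>m. stage m (D m) (g m) (K m)"
    and f: "\<And>m v. v \<in> D m \<Longrightarrow> f v = g m v"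
    and common: "\<And>u v. u \<in> V \<Longrightarrow> v \<in> V \<Longrightarrow> \<exists>n. u \<in> D n \<and> v \<in> D n"
    using stage_limit by blast
  have "inj_on f V"
  proof (rule inj_onI)
    fix u v assume "u \<in> V" and "v \<in> V" and "f u = f v"
    then obtain n where "u \<in> D n" and "v \<in> D n" and "g n u = g n v"
      using common f by metis
    then show "u = v"
      using stageD(3)[OF stage] unfolding bij_betw_def by (meson inj_onD)
  qed
  moreover have "H (f u) (f v)" if "u \<in> V" and "v \<in> V" and "E u v" for u v
    using common[OF that(1,2)] stageD(5)[OF stage] that(3) f by metis
  moreover have "UNIV - f ` V \<subseteq> (\<Union>i<R. {w. \<not> H w (c i)})"
  proof (rule subsetI, rule ccontr)
    fix y assume "y \<in> UNIV - f ` V" and "y \<notin> (\<Union>i<R. {w. \<not> H w (c i)})"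
    then obtain m where "y \<in> targets m"
      using targets_exhaust by blast
    then obtain v where "v \<in> D m" and "y = g m v"
      using stageD(3)[OF stage] unfolding bij_betw_def by blast
    then have "y \<in> f ` V"
      using stageD(1)[OF stage] f by (metis image_eqI subsetD)
    with \<open>y \<in> UNIV - f ` V\<close> show False
      by blast
  qed
  then have "finite (UNIV - f ` V)"
    by (rule finite_subset) (simp add: finite_non_neighbours_c)
  ultimately show ?thesis
    unfolding has_cofinite_copy_def by blast
qed

end

lemma strongly_contracting_if_copies:
  assumes "graph V E"
    and copies: "\<And>H. graph UNIV H \<Longrightarrow> infinite {v. cofinite_degree UNIV H v} \<Longrightarrow> has_cofinite_copy V E H"
  shows "strongly_contracting V E"
proof (rule strongly_contractingI)
  fix l :: "nat \<Rightarrow> nat"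
  have "has_cofinite_copy V E (threshold_graph l)"
    using copies graph_threshold_graph infinite_cofinite_degree_threshold_graph by blast
  then obtain k A where "A \<subseteq> V" "independent E A" "card A = Suc (l k)"
    "finite (nbhd E A)" "card (nbhd E A) \<le> k"
    using contracting_set_of_threshold_graph_copy[OF assms(1)] by blast
  then show "\<exists>k A. A \<subseteq> V \<and> independent E A \<and> l k \<le> card A
              \<and> finite (nbhd E A) \<and> card (nbhd E A) \<le> k"
    by (intro exI[of _ k] exI[of _ A]) simp
qed

lemma copies_if_strongly_contracting:
  assumes "graph V E" and "countable V" and "strongly_contracting V E"
    and "graph UNIV H" and "infinite {v. cofinite_degree UNIV H v}"
  shows "has_cofinite_copy V E H"
proof -
  obtain k where "\<And>l. \<exists>A. A \<subseteq> V \<and> independent E A \<and> (infinite A \<or> l \<le> card A)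
                        \<and> finite (nbhd E A) \<and> card (nbhd E A) \<le> k"
    using assms(3) unfolding strongly_contracting_def by blast
  moreover obtain c :: "nat \<Rightarrow> nat" where "inj c" and "\<And>i. cofinite_degree UNIV H (c i)"
    and "\<And>i j. i \<noteq> j \<Longrightarrow> H (c i) (c j)"
    using infinite_clique_of_cofinite_degree[OF assms(4,5)] by blast
  ultimately interpret cofinite_embedding V E H k c
    using assms(1,2,4) by unfold_locales
  show ?thesis
    by (rule cofinite_copy)
qed

theorem mainTheorem15:
  fixes V :: "'a set" and E :: "'a \<Rightarrow> 'a \<Rightarrow> bool"
  assumes "graph V E" and "countable V" and "infinite V"
  shows "(\<forall>H :: nat \<Rightarrow> nat \<Rightarrow> bool. graph UNIV H \<and> infinite {v. cofinite_degree UNIV H v}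
            \<longrightarrow> has_cofinite_copy V E H)
         \<longleftrightarrow> strongly_contracting V E"
  using strongly_contracting_if_copies[OF assms(1)] copies_if_strongly_contracting[OF assms(1,2)]
  by blast

end
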